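(* Let $S=(\mathcal{E},\Sigma,X,\mathcal{O})$ be an entity. Then $S$ is outcome determined (i.e. for all $(e,p),(f,q)\in\mathcal{E}\times\Sigma$, $O(e,p)=O(f,q)$ implies $(e,p)=(f,q)$) if and only if the central eigen closure operator $cl_{eig}$ on $\mathcal{E}\times\Sigma$ satisfies the $T_0$ separation axiom.
   Context: An entity $S=(\mathcal{E},\Sigma,X,\mathcal{O})$ consists of a set $\mathcal{E}$ (experiments), a set $\Sigma$ (states), and for each $e\in\mathcal{E}$, $p\in\Sigma$ a nonempty set $O(e,p)$ (possible outcomes), with $X=\bigcup_{e,p}O(e,p)$ and $\mathcal{O}=\{O(e,p)\}$. The central eigen map $eig:\mathcal{P}(X)\to\mathcal{P}(\mathcal{E}\times\Sigma)$ is defined by $(e,p)\in eig(A)\iff O(e,p)\subseteq A$. Let $\mathcal{Y}_{eig}=\{eig(A): A\subseteq X\}$; it is a closure system (contains $\emptyset$ and $\mathcal{E}\times\Sigma$ and is closed under arbitrary intersections), and $cl_{eig}(K)=\bigcap\{Y\in\mathcal{Y}_{eig}: K\subseteq Y\}$ for $K\subseteq\mathcal{E}\times\Sigma$. A closure operator $cl$ on a set $W$ satisfies $T_0$ iff $cl(\{w\})=cl(\{v\})$ implies $w=v$. *)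

theory Defs
  imports Main
begin

definition entity :: "'e set \<Rightarrow> 's set \<Rightarrow> ('e \<Rightarrow> 's \<Rightarrow> 'x set) \<Rightarrow> bool" where
  "entity E Sig Out \<longleftrightarrow> (\<forall>e\<in>E. \<forall>p\<in>Sig. Out e p \<noteq> {})"

definition outcomes :: "'e set \<Rightarrow> 's set \<Rightarrow> ('e \<Rightarrow> 's \<Rightarrow> 'x set) \<Rightarrow> 'x set" where
  "outcomes E Sig Out = (\<Union>e\<in>E. \<Union>p\<in>Sig. Out e p)"

definition eig :: "'e set \<Rightarrow> 's set \<Rightarrow> ('e \<Rightarrow> 's \<Rightarrow> 'x set) \<Rightarrow> 'x set \<Rightarrow> ('e \<times> 's) set" where
  "eig E Sig Out A = {(e, p). e \<in> E \<and> p \<in> Sig \<and> Out e p \<subseteq> A}"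

definition Y_eig :: "'e set \<Rightarrow> 's set \<Rightarrow> ('e \<Rightarrow> 's \<Rightarrow> 'x set) \<Rightarrow> ('e \<times> 's) set set" where
  "Y_eig E Sig Out = {eig E Sig Out A | A. A \<subseteq> outcomes E Sig Out}"

definition cl_eig :: "'e set \<Rightarrow> 's set \<Rightarrow> ('e \<Rightarrow> 's \<Rightarrow> 'x set) \<Rightarrow> ('e \<times> 's) set \<Rightarrow> ('e \<times> 's) set" where
  "cl_eig E Sig Out K = \<Inter>{Y \<in> Y_eig E Sig Out. K \<subseteq> Y}"

definition T0_on :: "'a set \<Rightarrow> ('a set \<Rightarrow> 'a set) \<Rightarrow> bool" where
  "T0_on W cl \<longleftrightarrow> (\<forall>w\<in>W. \<forall>v\<in>W. cl {w} = cl {v} \<longrightarrow> w = v)"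

definition outcome_determined :: "'e set \<Rightarrow> 's set \<Rightarrow> ('e \<Rightarrow> 's \<Rightarrow> 'x set) \<Rightarrow> bool" where
  "outcome_determined E Sig Out \<longleftrightarrow>
     (\<forall>e\<in>E. \<forall>p\<in>Sig. \<forall>f\<in>E. \<forall>q\<in>Sig. Out e p = Out f q \<longrightarrow> (e, p) = (f, q))"

end

theory Submission
  imports Defs
begin

(* The closure of a single pair (e, p) is eig (Out e p), the set of pairs whose outcomes
   all lie in Out e p. These sets are ordered exactly as the outcome sets are, so two
   points have the same closure iff they have the same outcome set. *)

lemma eig_Out_subset_iff:
  assumes "e \<in> E" "p \<in> Sig"
  shows "eig E Sig Out (Out e p) \<subseteq> eig E Sig Out B \<longleftrightarrow> Out e p \<subseteq> B"
  using assms unfolding eig_def by blast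

lemma eig_Out_eq_iff:
  assumes "e \<in> E" "p \<in> Sig" "f \<in> E" "q \<in> Sig"
  shows "eig E Sig Out (Out e p) = eig E Sig Out (Out f q) \<longleftrightarrow> Out e p = Out f q"
  using eig_Out_subset_iff[OF assms(1,2)] eig_Out_subset_iff[OF assms(3,4)]
  by (metis subset_antisym order_refl)

lemma cl_eig_singleton:
  assumes "e \<in> E" "p \<in> Sig"
  shows "cl_eig E Sig Out {(e, p)} = eig E Sig Out (Out e p)"
proof
  have "Out e p \<subseteq> outcomes E Sig Out"
    using assms unfolding outcomes_def by blast
  then have "eig E Sig Out (Out e p) \<in> Y_eig E Sig Out"
    unfolding Y_eig_def by blast
  moreover have "(e, p) \<in> eig E Sig Out (Out e p)"
    using assms unfolding eig_def by blast
  ultimately show "cl_eig E Sig Out {(e, p)} \<subseteq> eig E Sig Out (Out e p)"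
    unfolding cl_eig_def by blast
next
  show "eig E Sig Out (Out e p) \<subseteq> cl_eig E Sig Out {(e, p)}"
    unfolding cl_eig_def Y_eig_def eig_def by blast
qed

lemma cl_eig_singleton_eq_iff:
  assumes "e \<in> E" "p \<in> Sig" "f \<in> E" "q \<in> Sig"
  shows "cl_eig E Sig Out {(e, p)} = cl_eig E Sig Out {(f, q)} \<longleftrightarrow> Out e p = Out f q"
  using assms by (simp add: cl_eig_singleton eig_Out_eq_iff)

theorem mainTheorem2:
  fixes E :: "'e set" and Sig :: "'s set" and Out :: "'e \<Rightarrow> 's \<Rightarrow> 'x set"
  assumes "entity E Sig Out"
  shows "outcome_determined E Sig Out \<longleftrightarrow> T0_on (E \<times> Sig) (cl_eig E Sig Out)"
  unfolding outcome_determined_def T0_on_def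
  by (auto simp: cl_eig_singleton_eq_iff)

end
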